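(* Let $\mu_0<\mu_1$, $\sigma_H>0$, $\pi,\lambda,p\in(0,1)$ fixed, and $s\in(\mu_0,\mu_1)$. Define $A(s)=1-\Phi\big((s-\mu_1)/\sigma_H\big)$, $B(s)=1-\Phi\big((s-\mu_0)/\sigma_H\big)$ (with $\Phi$ the standard normal cdf), \[ \lambda(1,\pi;s)=\frac{\lambda\,[\pi A(s)+(1-\pi)p]}{\pi\,[\lambda A(s)+(1-\lambda)B(s)]+(1-\pi)\,p},\qquad P_S(1,\pi;s)=\lambda(1,\pi;s)^2 . \] Then, holding $(s,\pi,\lambda,p,\mu_0,\mu_1)$ fixed, $\partial_{\sigma_H}\lambda(1,\pi;s)<0$ and $\partial_{\sigma_H}P_S(1,\pi;s)<0$.
   Context: Gaussian–quadratic benchmark: $s\mid(\theta,\omega)\sim\mathcal N(\mu_\omega,\sigma_\theta^2)$; $A$ and $B$ are the probabilities that the High type's signal exceeds the cutoff $s$ in states $\omega=1$ and $\omega=0$; the Low type recommends risk with signal-independent probability $p$; $\lambda(1,\pi;s)$ is the posterior that the state is good after a risky recommendation; effort with cost $c(e)=e^2/2$ is $e^*=\lambda(1,\pi;s)$; $P_S$ is the success probability. *)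

theory Defs
  imports "HOL-Probability.Probability"
begin

definition Phi :: "real \<Rightarrow> real" where
  "Phi x = cdf (density lborel std_normal_density) x"

definition A_hi :: "real \<Rightarrow> real \<Rightarrow> real \<Rightarrow> real" where
  "A_hi mu1 sH s = 1 - Phi ((s - mu1) / sH)"

definition B_hi :: "real \<Rightarrow> real \<Rightarrow> real \<Rightarrow> real" where
  "B_hi mu0 sH s = 1 - Phi ((s - mu0) / sH)"

definition post_risky :: "real \<Rightarrow> real \<Rightarrow> real \<Rightarrow> real \<Rightarrow> real \<Rightarrow> real \<Rightarrow> real \<Rightarrow> real" where
  "post_risky mu0 mu1 sH lam pr p s =
     lam * (pr * A_hi mu1 sH s + (1 - pr) * p) /
     (pr * (lam * A_hi mu1 sH s + (1 - lam) * B_hi mu0 sH s) + (1 - pr) * p)"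

definition succ_prob :: "real \<Rightarrow> real \<Rightarrow> real \<Rightarrow> real \<Rightarrow> real \<Rightarrow> real \<Rightarrow> real \<Rightarrow> real" where
  "succ_prob mu0 mu1 sH lam pr p s = (post_risky mu0 mu1 sH lam pr p s)\<^sup>2"

end

theory Submission
  imports Defs
begin

text \<open>For a cutoff between the two means, raising \<open>\<sigma>\<^sub>H\<close> lowers the probability \<open>A\<close> that the
  High type's signal clears the cutoff in the good state (the cutoff lies below \<open>\<mu>\<^sub>1\<close>) and raises
  the corresponding probability \<open>B\<close> in the bad state (the cutoff lies above \<open>\<mu>\<^sub>0\<close>). The posterior
  is the share \<open>f / (f + g)\<close> of the good-state mass \<open>f = \<lambda> (\<pi> A + (1 - \<pi>) p)\<close> against the
  bad-state mass \<open>g = (1 - \<lambda>) (\<pi> B + (1 - \<pi>) p)\<close>; with \<open>f\<close> falling and \<open>g\<close> rising this share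
  falls, and so does its square \<open>P\<^sub>S\<close>.\<close>

lemma Phi_diff_eq_interval_integral:
  assumes "x < y"
  shows "Phi y - Phi x = (LBINT t=x..y. std_normal_density t)"
proof -
  let ?M = "density lborel std_normal_density"
  interpret prob_space ?M by (rule prob_space_normal_density) simp
  interpret real_distribution ?M by unfold_locales auto
  have "Phi y - Phi x = measure ?M {x<..y}"
    unfolding Phi_def using assms by (rule cdf_diff_eq)
  also have "\<dots> = integral\<^sup>L ?M (indicator {x<..y})" by simp
  also have "\<dots> = (LBINT t:{x<..y}. std_normal_density t)"
    unfolding set_lebesgue_integral_def
    by (subst integral_density) (auto simp: mult.commute)
  also have "\<dots> = (LBINT t=x..y. std_normal_density t)"
    using assms by (simp add: interval_integral_Ioc)
  finally show ?thesis .
qed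

lemma Phi_eq_interval_integral: "Phi y = Phi x + (LBINT t=x..y. std_normal_density t)"
proof (cases x y rule: linorder_cases)
  case less
  then show ?thesis using Phi_diff_eq_interval_integral[of x y] by simp
next
  case greater
  then show ?thesis
    using Phi_diff_eq_interval_integral[of y x] by (simp add: interval_integral_endpoints_reverse[of x y])
qed simp

lemma Phi_has_real_derivative: "(Phi has_real_derivative std_normal_density x) (at x)"
proof -
  have "continuous_on {x - 1..x + 1} std_normal_density"
    unfolding std_normal_density_def by (intro continuous_intros) auto
  then have "((\<lambda>y. LBINT t=x..y. std_normal_density t) has_vector_derivative std_normal_density x)
      (at x within {x - 1..x + 1})"
    by (intro interval_integral_FTC2) auto
  moreover have "at x within {x - 1..x + 1} = at x"
    by (rule at_within_Icc_at) auto
  ultimately have "((\<lambda>y. Phi x + (LBINT t=x..y. std_normal_density t))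
      has_real_derivative 0 + std_normal_density x) (at x)"
    by (intro DERIV_add DERIV_const) (simp add: has_real_derivative_iff_has_vector_derivative)
  then show ?thesis
    by (subst Phi_eq_interval_integral[of _ x, abs_def]) simp
qed

lemma Phi_le_1: "Phi x \<le> 1"
proof -
  let ?M = "density lborel std_normal_density"
  interpret prob_space ?M by (rule prob_space_normal_density) simp
  interpret real_distribution ?M by unfold_locales auto
  show ?thesis unfolding Phi_def by (rule cdf_bounded_prob)
qed

lemma normal_tail_scale_has_real_derivative:
  assumes "\<sigma> \<noteq> 0"
  shows "((\<lambda>\<tau>. 1 - Phi (c / \<tau>)) has_real_derivative std_normal_density (c / \<sigma>) * c / \<sigma>\<^sup>2) (at \<sigma>)"
proof -
  have "((\<lambda>\<tau>. c / \<tau>) has_real_derivative - c / \<sigma>\<^sup>2) (at \<sigma>)"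
    using assms by (auto intro!: derivative_eq_intros simp: power2_eq_square)
  from DERIV_chain2[OF Phi_has_real_derivative this]
  have "((\<lambda>\<tau>. 1 - Phi (c / \<tau>)) has_real_derivative 0 - std_normal_density (c / \<sigma>) * (- c / \<sigma>\<^sup>2)) (at \<sigma>)"
    by (intro DERIV_diff DERIV_const)
  then show ?thesis by simp
qed

lemma DERIV_share_neg:
  fixes f g :: "real \<Rightarrow> real"
  assumes "(f has_real_derivative f') (at x)" "(g has_real_derivative g') (at x)"
    and "f x > 0" "g x > 0" "f' < 0" "g' \<ge> 0"
  shows "((\<lambda>y. f y / (f y + g y)) has_real_derivative (f' * g x - f x * g') / (f x + g x)\<^sup>2) (at x)"
    and "(f' * g x - f x * g') / (f x + g x)\<^sup>2 < 0"
proof -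
  have "((\<lambda>y. f y / (f y + g y)) has_real_derivative
      (f' * (f x + g x) - f x * (f' + g')) / ((f x + g x) * (f x + g x))) (at x)"
    using assms by (intro DERIV_divide DERIV_add) auto
  then show "((\<lambda>y. f y / (f y + g y)) has_real_derivative (f' * g x - f x * g') / (f x + g x)\<^sup>2) (at x)"
    by (simp add: power2_eq_square algebra_simps)
  have "f' * g x < 0" "f x * g' \<ge> 0"
    using assms by (simp_all add: mult_neg_pos)
  then have "f' * g x - f x * g' < 0" by linarith
  then show "(f' * g x - f x * g') / (f x + g x)\<^sup>2 < 0"
    using assms by (simp add: divide_neg_pos)
qed

lemma DERIV_power2_neg:
  fixes f :: "real \<Rightarrow> real"
  assumes "(f has_real_derivative D) (at x)" "f x > 0" "D < 0"
  shows "((\<lambda>y. (f y)\<^sup>2) has_real_derivative 2 * f x * D) (at x)" and "2 * f x * D < 0"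
proof -
  show "((\<lambda>y. (f y)\<^sup>2) has_real_derivative 2 * f x * D) (at x)"
    using DERIV_power[OF assms(1), of 2] by (simp add: mult_ac)
  show "2 * f x * D < 0"
    using assms(2,3) by (simp add: mult_pos_neg)
qed

theorem lemmaD5:
  fixes mu0 mu1 sH lam pr p s :: real
  assumes "mu0 < mu1" and "sH > 0"
    and "0 < pr" "pr < 1" and "0 < lam" "lam < 1" and "0 < p" "p < 1"
    and "mu0 < s" "s < mu1"
  shows "(\<exists>D. ((\<lambda>x. post_risky mu0 mu1 x lam pr p s) has_real_derivative D) (at sH) \<and> D < 0)
       \<and> (\<exists>D. ((\<lambda>x. succ_prob mu0 mu1 x lam pr p s) has_real_derivative D) (at sH) \<and> D < 0)"
proof -
  define f where "f x = lam * (pr * A_hi mu1 x s + (1 - pr) * p)" for x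
  define g where "g x = (1 - lam) * (pr * B_hi mu0 x s + (1 - pr) * p)" for x
  have post: "post_risky mu0 mu1 x lam pr p s = f x / (f x + g x)" for x
    by (simp add: post_risky_def f_def g_def algebra_simps)
  have "A_hi mu1 sH s \<ge> 0" "B_hi mu0 sH s \<ge> 0"
    by (simp_all add: A_hi_def B_hi_def Phi_le_1)
  then have pos: "f sH > 0" "g sH > 0"
    unfolding f_def g_def using assms by (simp_all add: add_nonneg_pos)
  define dA where "dA = std_normal_density ((s - mu1) / sH) * (s - mu1) / sH\<^sup>2"
  define dB where "dB = std_normal_density ((s - mu0) / sH) * (s - mu0) / sH\<^sup>2"
  have "dA < 0" "dB > 0"
    unfolding dA_def dB_def using assms
    by (simp_all add: std_normal_density_def mult_pos_neg divide_neg_pos)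
  then have signs: "lam * (pr * dA + 0) < 0" "(1 - lam) * (pr * dB + 0) \<ge> 0"
    using assms by (simp_all add: mult_pos_neg)
  have "(f has_real_derivative lam * (pr * dA + 0)) (at sH)"
    "(g has_real_derivative (1 - lam) * (pr * dB + 0)) (at sH)"
    unfolding f_def g_def A_hi_def B_hi_def dA_def dB_def using assms
    by (intro DERIV_cmult DERIV_add DERIV_const normal_tail_scale_has_real_derivative; simp)+
  note dpost = DERIV_share_neg[OF this pos signs]
  have "f sH / (f sH + g sH) > 0"
    using pos by simp
  note dsucc = DERIV_power2_neg[OF dpost(1) this dpost(2)]
  show ?thesis
    unfolding succ_prob_def post using dpost dsucc by blast
qed

end
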